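(* Let $\mathcal{B}$ be a $d$-dimensional manifold with a torsion-free flat connection $\nabla$, let $F\in C^\infty(\mathcal{B})$ and $b\in\mathcal{B}$. Then $F$ satisfies the Bryuno condition at $b$ if and only if it satisfies Condition N at $b$.
   Context: $F''=\nabla\nabla F$ is the (symmetric) Hessian, $\mathcal{K}_b=\ker dF_b\subset T_b\mathcal{B}$. In flat (affine) local coordinates $\xi_1,\dots,\xi_d$ (coordinates with $\nabla$-parallel differentials), $F''$ has components $\partial^2F/\partial\xi_j\partial\xi_k$. Bryuno condition at $b$: the linear map $\mathbf{U}:T_b\mathcal{B}\oplus\mathbb{R}\to T_b^*\mathcal{B}$, $\mathbf{U}(X,\alpha)=\nabla_X\nabla F+\alpha\,dF_b$, has rank $d$; equivalently, if $X,Y\in T_b\mathcal{B}$ satisfy $\nabla_X\nabla F\propto dF_b$ and $\nabla_Y\nabla F\propto dF_b$ then $X\propto Y$ ($\propto$ meaning linearly dependent); in coordinates, the $d\times(d+1)$ matrix $\big[\partial^2F/\partial\xi_j\partial\xi_k \;\big|\; \partial F/\partial\xi_j\big]$ has rank $d$. Condition N at $b$: $X\in\mathcal{K}_b$ and $\nabla_X\nabla F=0$ imply $X=0$; equivalently the map $\mathbf{V}:T_b\mathcal{B}\to T_b^*\mathcal{B}\oplus\mathbb{R}$, $\mathbf{V}(X)=(\nabla_X\nabla F,dF_b(X))$, has rank $d$; in coordinates, the $(d+1)\times d$ matrix obtained by appending the row $(\partial F/\partial\xi_k)_k$ below the Hessian matrix has rank $d$. *)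

theory Defs
  imports "HOL-Analysis.Analysis"
begin

text \<open>Local model: a neighbourhood of b in the affine manifold B, read in flat
  (affine) coordinates xi_1..xi_d, i.e. an open subset of real^'n with d = CARD('n).\<close>

definition pderiv_coord :: "'n::finite \<Rightarrow> (real^'n \<Rightarrow> real) \<Rightarrow> real^'n \<Rightarrow> real" where
  "pderiv_coord j f x = frechet_derivative f (at x) (axis j 1)"

fun Ck_on :: "nat \<Rightarrow> (real^'n::finite \<Rightarrow> real) \<Rightarrow> (real^'n) set \<Rightarrow> bool" where
  "Ck_on 0 f S = continuous_on S f"
| "Ck_on (Suc k) f S =
     (continuous_on S f \<and> f differentiable_on S \<and> (\<forall>j. Ck_on k (pderiv_coord j f) S))"

definition smooth_on :: "(real^'n::finite \<Rightarrow> real) \<Rightarrow> (real^'n) set \<Rightarrow> bool" where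
  "smooth_on f S \<longleftrightarrow> (\<forall>k. Ck_on k f S)"

definition grad_coord :: "(real^'n::finite \<Rightarrow> real) \<Rightarrow> real^'n \<Rightarrow> real^'n" where
  "grad_coord F b = (\<chi> j. pderiv_coord j F b)"

text \<open>Components of the Hessian F'' = nabla nabla F in flat coordinates: d^2F/dxi_j dxi_k.\<close>
definition hess_coord :: "(real^'n::finite \<Rightarrow> real) \<Rightarrow> real^'n \<Rightarrow> real^'n^'n" where
  "hess_coord F b = (\<chi> j k. pderiv_coord j (pderiv_coord k F) b)"

definition bryuno_cond :: "(real^'n::finite \<Rightarrow> real) \<Rightarrow> real^'n \<Rightarrow> bool" where
  "bryuno_cond F b \<longleftrightarrow>
     dim (range (\<lambda>(X :: real^'n, \<alpha> :: real). hess_coord F b *v X + \<alpha> *\<^sub>R grad_coord F b))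
       = CARD('n)"

definition condition_N :: "(real^'n::finite \<Rightarrow> real) \<Rightarrow> real^'n \<Rightarrow> bool" where
  "condition_N F b \<longleftrightarrow>
     (\<forall>X :: real^'n. grad_coord F b \<bullet> X = 0 \<and> hess_coord F b *v X = 0 \<longrightarrow> X = 0)"

end

theory Submission
  imports Defs
begin

text \<open>In flat coordinates the map U is (X, \<alpha>) \<mapsto> H X + \<alpha> g with H = F''(b) and g = dF_b.
  The orthogonal complement of its image is the set of X with H^T X = 0 and g \<bullet> X = 0, so U
  has full rank iff only X = 0 satisfies both. Since F is C^2, Schwarz's theorem makes H
  symmetric, which turns this into Condition N.\<close>

lemma has_real_derivative_along_line:
  fixes f :: "'a::real_normed_vector \<Rightarrow> real"
  assumes "f differentiable (at (p + t *\<^sub>R v))"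
  shows "((\<lambda>s. f (p + s *\<^sub>R v)) has_real_derivative frechet_derivative f (at (p + t *\<^sub>R v)) v) (at t)"
proof -
  let ?D = "frechet_derivative f (at (p + t *\<^sub>R v))"
  have D: "(f has_derivative ?D) (at (p + t *\<^sub>R v))"
    using assms frechet_derivative_works by blast
  have "((\<lambda>s. p + s *\<^sub>R v) has_derivative (\<lambda>s. s *\<^sub>R v)) (at t)"
    by (auto intro!: derivative_eq_intros)
  from has_derivative_compose[OF this D]
  have "((\<lambda>s. f (p + s *\<^sub>R v)) has_derivative (\<lambda>s. ?D (s *\<^sub>R v))) (at t)" .
  moreover have "?D (s *\<^sub>R v) = ?D v * s" for s
    using linear_scale[OF has_derivative_linear[OF D]] by simp
  ultimately show ?thesis by (simp add: has_field_derivative_def)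
qed

lemma second_difference_mean_value:
  fixes f :: "'a::real_normed_vector \<Rightarrow> real" and u :: 'a
  defines "g \<equiv> \<lambda>x. frechet_derivative f (at x) u"
  assumes "0 < h"
    and diff: "\<And>s t. s \<in> {0..h} \<Longrightarrow> t \<in> {0..h} \<Longrightarrow>
      f differentiable (at (p + s *\<^sub>R u + t *\<^sub>R v)) \<and> g differentiable (at (p + s *\<^sub>R u + t *\<^sub>R v))"
  shows "\<exists>\<sigma>\<in>{0<..<h}. \<exists>\<tau>\<in>{0<..<h}.
    f (p + h *\<^sub>R u + h *\<^sub>R v) - f (p + h *\<^sub>R u) - f (p + h *\<^sub>R v) + f p
      = h * h * frechet_derivative g (at (p + \<sigma> *\<^sub>R u + \<tau> *\<^sub>R v)) v"
proof -
  define \<phi> where "\<phi> s = f (p + h *\<^sub>R v + s *\<^sub>R u) - f (p + s *\<^sub>R u)" for s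
  define \<phi>' where "\<phi>' s = g (p + h *\<^sub>R v + s *\<^sub>R u) - g (p + s *\<^sub>R u)" for s
  have "(\<phi> has_real_derivative \<phi>' s) (at s)" if "0 \<le> s" "s \<le> h" for s
    unfolding \<phi>_def[abs_def] \<phi>'_def g_def
    using diff[of s h] diff[of s 0] that \<open>0 < h\<close>
    by (intro DERIV_diff has_real_derivative_along_line) (auto simp: add_ac)
  then obtain \<sigma> where \<sigma>: "0 < \<sigma>" "\<sigma> < h" "\<phi> h - \<phi> 0 = h * \<phi>' \<sigma>"
    using MVT2[OF \<open>0 < h\<close>, of \<phi> \<phi>'] by auto
  define \<psi> where "\<psi> t = g (p + \<sigma> *\<^sub>R u + t *\<^sub>R v)" for t
  have "(\<psi> has_real_derivative frechet_derivative g (at (p + \<sigma> *\<^sub>R u + t *\<^sub>R v)) v) (at t)"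
    if "0 \<le> t" "t \<le> h" for t
    unfolding \<psi>_def[abs_def]
    using diff[of \<sigma> t] that \<sigma> by (intro has_real_derivative_along_line) auto
  then obtain \<tau> where \<tau>: "0 < \<tau>" "\<tau> < h"
    "\<psi> h - \<psi> 0 = h * frechet_derivative g (at (p + \<sigma> *\<^sub>R u + \<tau> *\<^sub>R v)) v"
    using MVT2[OF \<open>0 < h\<close>, of \<psi> "\<lambda>t. frechet_derivative g (at (p + \<sigma> *\<^sub>R u + t *\<^sub>R v)) v"]
    by auto
  have "\<phi>' \<sigma> = \<psi> h - \<psi> 0"
    by (simp add: \<phi>'_def \<psi>_def add_ac)
  moreover have "\<phi> h - \<phi> 0 = f (p + h *\<^sub>R u + h *\<^sub>R v) - f (p + h *\<^sub>R u) - f (p + h *\<^sub>R v) + f p"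
    by (simp add: \<phi>_def add_ac)
  ultimately show ?thesis
    using \<sigma> \<tau> by (intro bexI[of _ \<sigma>] bexI[of _ \<tau>]) (auto simp: mult.assoc)
qed

lemma isCont_ball_within_open:
  fixes c :: "'a::metric_space \<Rightarrow> 'b::metric_space"
  assumes "open U" "b \<in> U" "isCont c b" "\<epsilon> > 0"
  obtains \<delta> where "\<delta> > 0" "ball b \<delta> \<subseteq> U" "\<And>x. x \<in> ball b \<delta> \<Longrightarrow> dist (c x) (c b) < \<epsilon>"
proof -
  obtain e where "e > 0" "ball b e \<subseteq> U"
    using assms(1,2) open_contains_ball by blast
  moreover obtain d where "d > 0" "\<And>x. dist x b < d \<Longrightarrow> dist (c x) (c b) < \<epsilon>"
    using assms(3)[unfolded continuous_at_eps_delta, rule_format, OF \<open>\<epsilon> > 0\<close>] by blast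
  ultimately show ?thesis
    by (intro that[of "min e d"]) (auto simp: dist_commute)
qed

lemma pderiv_coord_second_difference:
  fixes f :: "real^'n::finite \<Rightarrow> real"
  assumes "open U" "Ck_on 2 f U" "0 < h" "cball b (2 * h) \<subseteq> U"
  obtains x where "x \<in> ball b (2 * h)"
    "f (b + h *\<^sub>R axis j 1 + h *\<^sub>R axis k 1) - f (b + h *\<^sub>R axis j 1) - f (b + h *\<^sub>R axis k 1) + f b
      = h * h * pderiv_coord k (pderiv_coord j f) x"
proof -
  let ?q = "\<lambda>s t. b + s *\<^sub>R axis j 1 + t *\<^sub>R axis k (1::real)"
  have dist_q: "dist b (?q s t) \<le> \<bar>s\<bar> + \<bar>t\<bar>" for s t
  proof -
    have "dist b (?q s t) = norm (s *\<^sub>R axis j (1::real) + t *\<^sub>R axis k 1)"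
      using norm_minus_cancel[of "s *\<^sub>R axis j (1::real) + t *\<^sub>R axis k 1"]
      by (simp add: dist_norm)
    then show ?thesis
      using norm_triangle_ineq[of "s *\<^sub>R axis j (1::real)" "t *\<^sub>R axis k 1"] by simp
  qed
  have "f differentiable_on U" "pderiv_coord j f differentiable_on U"
    using \<open>Ck_on 2 f U\<close> by (simp_all add: numeral_2_eq_2)
  moreover have "?q s t \<in> U" if "s \<in> {0..h}" "t \<in> {0..h}" for s t
    using dist_q[of s t] that assms(4) by auto
  ultimately have "f differentiable (at (?q s t)) \<and> pderiv_coord j f differentiable (at (?q s t))"
    if "s \<in> {0..h}" "t \<in> {0..h}" for s t
    using that \<open>open U\<close> differentiable_on_eq_differentiable_at by blast
  then obtain \<sigma> \<tau> where "\<sigma> \<in> {0<..<h}" "\<tau> \<in> {0<..<h}"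
    "f (?q h h) - f (?q h 0) - f (?q 0 h) + f b = h * h * pderiv_coord k (pderiv_coord j f) (?q \<sigma> \<tau>)"
    using second_difference_mean_value[OF \<open>0 < h\<close>, of f b "axis j 1" "axis k 1"]
    by (auto simp: pderiv_coord_def[abs_def])
  moreover have "?q \<sigma> \<tau> \<in> ball b (2 * h)"
    using dist_q[of \<sigma> \<tau>] \<open>\<sigma> \<in> _\<close> \<open>\<tau> \<in> _\<close> by simp
  ultimately show ?thesis
    using that by simp
qed

lemma pderiv_coord_commute:
  fixes f :: "real^'n::finite \<Rightarrow> real"
  assumes "open U" "b \<in> U" "Ck_on 2 f U"
  shows "pderiv_coord j (pderiv_coord k f) b = pderiv_coord k (pderiv_coord j f) b"
proof -
  let ?c1 = "pderiv_coord k (pderiv_coord j f)"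
  let ?c2 = "pderiv_coord j (pderiv_coord k f)"
  have "continuous_on U ?c1" "continuous_on U ?c2"
    using \<open>Ck_on 2 f U\<close> by (simp_all add: numeral_2_eq_2)
  then have "isCont ?c1 b" "isCont ?c2 b"
    using \<open>open U\<close> \<open>b \<in> U\<close> continuous_on_eq_continuous_at by blast+
  txt \<open>The same second difference, divided by h^2, is a value of either mixed partial at
    some point within 2h of b.\<close>
  have close: "\<bar>?c2 b - ?c1 b\<bar> < 2 * \<epsilon>" if "\<epsilon> > 0" for \<epsilon>
  proof -
    obtain \<delta>1 where "\<delta>1 > 0" "ball b \<delta>1 \<subseteq> U" "\<And>x. x \<in> ball b \<delta>1 \<Longrightarrow> dist (?c1 x) (?c1 b) < \<epsilon>"
      using isCont_ball_within_open[OF \<open>open U\<close> \<open>b \<in> U\<close> \<open>isCont ?c1 b\<close> \<open>\<epsilon> > 0\<close>] by blast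
    obtain \<delta>2 where "\<delta>2 > 0" "\<And>x. x \<in> ball b \<delta>2 \<Longrightarrow> dist (?c2 x) (?c2 b) < \<epsilon>"
      using isCont_ball_within_open[OF \<open>open U\<close> \<open>b \<in> U\<close> \<open>isCont ?c2 b\<close> \<open>\<epsilon> > 0\<close>] by blast
    define h where "h = min \<delta>1 \<delta>2 / 4"
    have "0 < h" "cball b (2 * h) \<subseteq> U"
      using \<open>\<delta>1 > 0\<close> \<open>\<delta>2 > 0\<close> \<open>ball b \<delta>1 \<subseteq> U\<close> by (auto simp: h_def)
    then obtain x y where "x \<in> ball b (2 * h)" "y \<in> ball b (2 * h)"
      and eq1: "f (b + h *\<^sub>R axis j 1 + h *\<^sub>R axis k 1) - f (b + h *\<^sub>R axis j 1) - f (b + h *\<^sub>R axis k 1) + f b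
        = h * h * ?c1 x"
      and eq2: "f (b + h *\<^sub>R axis k 1 + h *\<^sub>R axis j 1) - f (b + h *\<^sub>R axis k 1) - f (b + h *\<^sub>R axis j 1) + f b
        = h * h * ?c2 y"
      using pderiv_coord_second_difference[OF \<open>open U\<close> \<open>Ck_on 2 f U\<close>] by metis
    have "f (b + h *\<^sub>R axis j 1 + h *\<^sub>R axis k 1) = f (b + h *\<^sub>R axis k 1 + h *\<^sub>R axis j 1)"
      by (simp add: add_ac)
    with eq1 eq2 have "h * h * ?c1 x = h * h * ?c2 y"
      by linarith
    then have "?c1 x = ?c2 y"
      using \<open>0 < h\<close> by simp
    moreover have "x \<in> ball b \<delta>1" "y \<in> ball b \<delta>2"
      using \<open>x \<in> _\<close> \<open>y \<in> _\<close> \<open>\<delta>1 > 0\<close> \<open>\<delta>2 > 0\<close> by (auto simp: h_def)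
    then have "dist (?c1 x) (?c1 b) < \<epsilon>" "dist (?c2 y) (?c2 b) < \<epsilon>"
      using \<open>\<And>x. x \<in> ball b \<delta>1 \<Longrightarrow> _\<close> \<open>\<And>x. x \<in> ball b \<delta>2 \<Longrightarrow> _\<close> by blast+
    ultimately show ?thesis
      by (simp add: dist_real_def)
  qed
  show ?thesis
    using close[of "\<bar>?c2 b - ?c1 b\<bar> / 2"] by force
qed

lemma hess_coord_symmetric:
  assumes "open U" "b \<in> U" "Ck_on 2 F U"
  shows "transpose (hess_coord F b) = hess_coord F b"
  using pderiv_coord_commute[OF assms]
  by (simp add: vec_eq_iff transpose_def hess_coord_def)

lemma subspace_dim_full_iff_orthogonal:
  fixes S :: "'a::euclidean_space set"
  assumes "subspace S"
  shows "dim S = DIM('a) \<longleftrightarrow> (\<forall>x. (\<forall>y\<in>S. x \<bullet> y = 0) \<longrightarrow> x = 0)"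
proof
  assume "dim S = DIM('a)"
  then have "S = UNIV"
    using dim_eq_full[of S] span_eq_iff[of S] assms by simp
  then show "\<forall>x. (\<forall>y\<in>S. x \<bullet> y = 0) \<longrightarrow> x = 0"
    by auto
next
  assume perp: "\<forall>x. (\<forall>y\<in>S. x \<bullet> y = 0) \<longrightarrow> x = 0"
  show "dim S = DIM('a)"
  proof (rule ccontr)
    assume "dim S \<noteq> DIM('a)"
    then have "dim S < DIM('a)"
      using dim_subset_UNIV[of S] by simp
    then obtain x where "x \<noteq> 0" "\<And>y. y \<in> span S \<Longrightarrow> orthogonal x y"
      using orthogonal_to_subspace_exists by blast
    then show False
      using perp span_base[of _ S] by (auto simp: orthogonal_def)
  qed
qed

lemma orthogonal_range_matrix_plus_line_iff:
  fixes H :: "real^'n^'m" and g :: "real^'m" and X :: "real^'m"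
  shows "(\<forall>Y \<alpha>. X \<bullet> (H *v Y + \<alpha> *\<^sub>R g) = 0) \<longleftrightarrow> g \<bullet> X = 0 \<and> transpose H *v X = 0"
proof -
  have adj: "X \<bullet> (H *v Y) = (transpose H *v X) \<bullet> Y" for Y
    by (simp add: dot_lmul_matrix)
  show ?thesis
  proof
    assume "\<forall>Y \<alpha>. X \<bullet> (H *v Y + \<alpha> *\<^sub>R g) = 0"
    from this[rule_format, of 0 1] this[rule_format, of "transpose H *v X" 0]
    show "g \<bullet> X = 0 \<and> transpose H *v X = 0"
      by (simp add: adj inner_commute)
  qed (simp add: inner_add_right adj inner_commute)
qed

lemma dim_range_matrix_plus_line_full_iff:
  fixes H :: "real^'n^'n" and g :: "real^'n"
  shows "dim (range (\<lambda>(X, \<alpha>::real). H *v X + \<alpha> *\<^sub>R g)) = CARD('n)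
    \<longleftrightarrow> (\<forall>X. g \<bullet> X = 0 \<and> transpose H *v X = 0 \<longrightarrow> X = 0)"
proof -
  have "linear (\<lambda>(X, \<alpha>::real). H *v X + \<alpha> *\<^sub>R g)"
    by (auto simp: linear_iff matrix_vector_right_distrib algebra_simps matrix_vector_mult_scaleR)
  then have "subspace (range (\<lambda>(X, \<alpha>::real). H *v X + \<alpha> *\<^sub>R g))"
    using linear_subspace_image subspace_UNIV by blast
  from subspace_dim_full_iff_orthogonal[OF this] show ?thesis
    by (simp add: orthogonal_range_matrix_plus_line_iff)
qed

theorem mainTheorem2:
  fixes F :: "real^'n::finite \<Rightarrow> real" and U :: "(real^'n) set" and b :: "real^'n"
  assumes "open U" and "b \<in> U" and "smooth_on F U"
  shows "bryuno_cond F b \<longleftrightarrow> condition_N F b"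
proof -
  have "Ck_on 2 F U"
    using \<open>smooth_on F U\<close> unfolding smooth_on_def by blast
  then have "transpose (hess_coord F b) = hess_coord F b"
    using hess_coord_symmetric \<open>open U\<close> \<open>b \<in> U\<close> by blast
  then show ?thesis
    unfolding bryuno_cond_def condition_N_def
    using dim_range_matrix_plus_line_full_iff[of "hess_coord F b" "grad_coord F b"] by simp
qed

end
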